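(* Let $n\ge 3$ and let $P(G(n))$ be the power graph of the gyrogroup $G(n)$ (defined in the context). Then $P(G(n))$ is planar for $n=3$ and non-planar for every $n\ge 4$.
   Context: Let $n\ge 3$ be an integer and $m=2^{n-1}$. Let $P(n)=\{0,1,\dots,m-1\}$, $H(n)=\{m,m+1,\dots,2^n-1\}$ and $G(n)=P(n)\cup H(n)$. For $i,j\in G(n)$ let $t,s,k\in P(n)$ be the residues modulo $m$ (taken in $\{0,\dots,m-1\}$) of $i+j$, $i+(\frac m2-1)j$ and $(\frac m2+1)i+(\frac m2-1)j$, respectively, and define $i\oplus j=t$ if $i,j\in P(n)$; $i\oplus j=t+m$ if $i\in P(n),j\in H(n)$; $i\oplus j=s+m$ if $i\in H(n),j\in P(n)$; $i\oplus j=k$ if $i,j\in H(n)$. Then $(G(n),\oplus)$ is a gyrogroup with identity $e=0$, and $P(n)$ is the cyclic group of order $m$ under addition mod $m$. Powers are defined by $a^1=a$, $a^{k+1}=a^k\oplus a$. The power graph $P(G(n))$ is the simple undirected graph with vertex set $G(n)$ in which distinct vertices $u,v$ are adjacent if and only if $u^k=v$ or $v^k=u$ for some positive integer $k$. *)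

theory Defs
  imports Main "Graph_Theory.Graph_Theory"
begin

text \<open>The gyrogroup G(n) on the carrier {0,...,2^n - 1}; m = 2^(n-1),
  P(n) = {0..<m}, H(n) = {m..<2^n}.\<close>

definition gyro_op :: "nat \<Rightarrow> nat \<Rightarrow> nat \<Rightarrow> nat" where
  "gyro_op n i j =
    (let m = 2 ^ (n - 1);
         t = (i + j) mod m;
         s = (i + (m div 2 - 1) * j) mod m;
         k = ((m div 2 + 1) * i + (m div 2 - 1) * j) mod m
     in if i < m \<and> j < m then t
        else if i < m \<and> m \<le> j then t + m
        else if m \<le> i \<and> j < m then s + m
        else k)"

definition gyro_carrier :: "nat \<Rightarrow> nat set" where
  "gyro_carrier n = {0..<2 ^ n}"

text \<open>Powers: a^1 = a, a^(k+1) = a^k \<oplus> a (only positive exponents are used).\<close>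
fun gyro_pow :: "nat \<Rightarrow> nat \<Rightarrow> nat \<Rightarrow> nat" where
  "gyro_pow n a 0 = 0"
| "gyro_pow n a (Suc 0) = a"
| "gyro_pow n a (Suc (Suc k)) = gyro_op n (gyro_pow n a (Suc k)) a"

text \<open>Power graph as a symmetric digraph (the Graph_Theory convention for undirected graphs).\<close>
definition power_graph :: "nat \<Rightarrow> nat pair_pre_digraph" where
  "power_graph n =
    \<lparr> pverts = gyro_carrier n,
      parcs = {(u, v). u \<in> gyro_carrier n \<and> v \<in> gyro_carrier n \<and> u \<noteq> v \<and>
                 (\<exists>k>0. gyro_pow n u k = v \<or> gyro_pow n v k = u)} \<rparr>"

end

theory Submission
  imports Defs
begin

text \<open>Every element of H(n) squares to 0, so its only powers are itself and 0: in the power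
  graph the vertices of H(n) are pendant vertices hanging off 0. A subdivision of K5 or K3,3 keeps
  at least five branch vertices of degree at least three, and in P(G(3)) only the four vertices of
  P(3) have such degree, hence P(G(3)) is planar. For n \<ge> 4 the cyclic group P(n) has order at
  least 8; 0 is a power of every element and every odd element generates P(n), so 0, 1, 3, 5, 7
  span a K5.\<close>

lemma verts3_subdivision_pair:
  assumes "subdivision_pair G H"
  shows "verts3 G = verts3 H"
  using assms
proof (induction rule: subdivision_pair_induct)
  case base
  then show ?case by simp
next
  case (divide e w H)
  interpret pair_bidirected_digraph H
    using divide(3) by (rule bidirected_digraphI_subdivision)
  show ?case
    using divide verts3_subdivide by simp
qed

lemma with_proj_if_compatible:
  assumes "compatible (with_proj G) H"
  shows "H = with_proj \<lparr>pverts = verts H, parcs = arcs H\<rparr>"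
  using assms by (cases H) (auto simp: compatible_def with_proj_def)

lemma subdivision_bidir_left:
  assumes "subdivision (G, rev_G) (H, rev_H)"
  shows "bidirected_digraph G rev_G"
  using assms by induction auto

lemma subdivision_with_proj:
  assumes sd: "subdivision (K, rev_K) (with_proj H, rev_H)"
  obtains K' where "K = with_proj K'" and "subdivision_pair K' H"
proof -
  define K' where "K' = \<lparr>pverts = verts K, parcs = arcs K\<rparr>"
  have "compatible (with_proj H) K"
    using subdivision_compatible[OF sd] by (simp add: compatible_def)
  then have K: "K = with_proj K'"
    unfolding K'_def by (rule with_proj_if_compatible)
  have "rev_K = swap_in (parcs K')"
    using subdivision_bidir_left[OF sd] unfolding K by (rule bidirected_digraph_rev_conv_pair)
  moreover have "rev_H = swap_in (parcs H)"
    using subdivision_bidir[OF sd] by (rule bidirected_digraph_rev_conv_pair)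
  ultimately have "subdivision_pair K' H"
    using sd unfolding K by simp
  with K show ?thesis
    using that by blast
qed

lemma five_le_card_verts3_if_Kuratowski:
  assumes "K\<^bsub>3,3\<^esub> (with_proj G) \<or> K\<^bsub>5\<^esub> (with_proj G)"
  shows "5 \<le> card (verts3 G)"
  using assms
proof
  assume K33: "K\<^bsub>3,3\<^esub> (with_proj G)"
  then obtain U V where "pverts G = U \<union> V" "U \<inter> V = {}" "card U = 3" "card V = 3"
    unfolding complete_bipartite_digraph_pair_def by blast
  moreover have "finite U" "finite V"
    using \<open>card U = 3\<close> \<open>card V = 3\<close> by (simp_all add: card_ge_0_finite)
  ultimately have "card (pverts G) = 6"
    by (simp add: card_Un_disjoint)
  then show ?thesis
    using verts3_K33[OF K33] by simp
next
  assume K5: "K\<^bsub>5\<^esub> (with_proj G)"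
  then show ?thesis
    using verts3_K5[OF K5] by (simp add: complete_digraph_pair_def)
qed

lemma verts3_subgraph:
  assumes "fin_digraph G" "subgraph H G"
  shows "verts3 H \<subseteq> verts3 G"
proof
  fix v
  assume "v \<in> verts3 H"
  moreover have "verts H \<subseteq> verts G"
    using assms(2) by (simp add: subgraph_def)
  ultimately show "v \<in> verts3 G"
    using fin_digraph.subgraph_in_degree[OF assms, of v] by (auto simp: verts3_def)
qed

lemma kuratowski_planar_if_card_verts3_less_5:
  assumes "pair_fin_digraph G" "card (verts3 G) < 5"
  shows "kuratowski_planar (with_proj G)"
  unfolding kuratowski_planar_def
proof (intro notI, elim exE conjE)
  fix H K rev_K rev_H
  assume sub: "subgraph H (with_proj G)" and sd: "subdivision (K, rev_K) (H, rev_H)"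
    and Kuratowski: "K\<^bsub>3,3\<^esub> K \<or> K\<^bsub>5\<^esub> K"
  interpret pair_fin_digraph G by fact
  define H' where "H' = \<lparr>pverts = verts H, parcs = arcs H\<rparr>"
  have H: "H = with_proj H'"
    unfolding H'_def using sub by (intro with_proj_if_compatible[of G]) (simp add: subgraph_def)
  obtain K' where K: "K = with_proj K'" and sd': "subdivision_pair K' H'"
    using sd unfolding H by (rule subdivision_with_proj)
  have "5 \<le> card (verts3 K')"
    using Kuratowski unfolding K by (rule five_le_card_verts3_if_Kuratowski)
  also have "verts3 K' = verts3 H'"
    using sd' by (rule verts3_subdivision_pair)
  also have "card (verts3 H') \<le> card (verts3 G)"
    using verts3_subgraph[OF fin_digraph_axioms sub[unfolded H]]
    by (intro card_mono) (auto simp: verts3_def)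
  finally show False
    using assms(2) by simp
qed

lemma not_kuratowski_planar_if_5_clique:
  assumes "pair_wf_digraph G" "V \<subseteq> pverts G" "card V = 5"
    and clique: "\<And>u v. u \<in> V \<Longrightarrow> v \<in> V \<Longrightarrow> u \<noteq> v \<Longrightarrow> (u, v) \<in> parcs G"
  shows "\<not> kuratowski_planar (with_proj G)"
proof -
  interpret G: pair_wf_digraph G by fact
  define K where "K = \<lparr>pverts = V, parcs = {(u, v). u \<in> V \<and> v \<in> V \<and> u \<noteq> v}\<rparr>"
  have "finite V"
    using assms(3) by (simp add: card_ge_0_finite)
  then have K5: "K\<^bsub>5\<^esub> (with_proj K)"
    using assms(3) by (auto simp: complete_digraph_pair_def K_def)
  interpret pair_graph K
    using K5 by (rule pair_graphI_complete)
  have "subgraph (with_proj K) (with_proj G)"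
  proof (rule subgraphI)
    show "verts (with_proj K) \<subseteq> verts (with_proj G)"
      using assms(2) by (simp add: K_def)
    show "arcs (with_proj K) \<subseteq> arcs (with_proj G)"
      using clique by (auto simp: K_def)
  qed (auto intro: wf_digraph_axioms G.wf_digraph_axioms)
  moreover have "subdivision (with_proj K, swap_in (parcs K)) (with_proj K, swap_in (parcs K))"
    by (rule subdivision_base) (rule bidirected_digraph)
  ultimately show ?thesis
    unfolding kuratowski_planar_def using K5 by blast
qed

lemma gyro_op_zero_left:
  assumes "a < 2 ^ n"
  shows "gyro_op n 0 a = a"
proof (cases n)
  case 0
  then show ?thesis using assms by (simp add: gyro_op_def)
next
  case (Suc n')
  then show ?thesis
    using assms by (auto simp: gyro_op_def Let_def le_mod_geq)
qed

lemma gyro_op_H_self: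
  assumes "2 ^ (n - 1) \<le> a"
  shows "gyro_op n a a = 0"
proof (cases "n \<le> 1")
  case True
  then show ?thesis by (simp add: gyro_op_def Let_def)
next
  case False
  define j where "j = n - 2"
  have n: "n = Suc (Suc j)"
    using False by (simp add: j_def)
  define h :: nat where "h = 2 ^ j"
  have "(h + 1) * a + (h - 1) * a = (h + 1 + (h - 1)) * a"
    by (simp only: add_mult_distrib)
  also have "\<dots> = 2 * h * a"
    by (simp add: h_def)
  finally have sum: "(h + 1) * a + (h - 1) * a = 2 * h * a" .
  have "gyro_op n a a = ((h + 1) * a + (h - 1) * a) mod (2 * h)"
    using assms by (simp add: gyro_op_def Let_def n h_def)
  also have "\<dots> = 0"
    unfolding sum by simp
  finally show ?thesis .
qed

lemma gyro_pow_Suc: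
  assumes "a < 2 ^ n"
  shows "gyro_pow n a (Suc k) = gyro_op n (gyro_pow n a k) a"
  using assms by (cases k) (simp_all add: gyro_op_zero_left)

lemma gyro_pow_P:
  assumes "a < 2 ^ (n - 1)"
  shows "gyro_pow n a k = k * a mod 2 ^ (n - 1)"
proof (induction k)
  case 0
  then show ?case by simp
next
  case (Suc k)
  have "(2::nat) ^ (n - 1) \<le> 2 ^ n"
    by (simp add: power_increasing)
  then have "a < 2 ^ n"
    using assms by linarith
  then have "gyro_pow n a (Suc k) = gyro_op n (k * a mod 2 ^ (n - 1)) a"
    using Suc by (simp add: gyro_pow_Suc)
  also have "\<dots> = (k * a mod 2 ^ (n - 1) + a) mod 2 ^ (n - 1)"
    using assms by (simp add: gyro_op_def Let_def)
  also have "\<dots> = (k * a + a) mod 2 ^ (n - 1)"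
    by (rule mod_add_left_eq)
  also have "\<dots> = Suc k * a mod 2 ^ (n - 1)"
    by (simp add: add.commute)
  finally show ?case .
qed

lemma gyro_pow_H:
  assumes "2 ^ (n - 1) \<le> a" "a < 2 ^ n"
  shows "gyro_pow n a k = (if even k then 0 else a)"
proof (induction k)
  case 0
  then show ?case by simp
next
  case (Suc k)
  then show ?case
    using assms by (simp add: gyro_pow_Suc gyro_op_zero_left gyro_op_H_self)
qed

lemma gyro_pow_odd_reaches_P:
  assumes "odd a" "a < 2 ^ (n - 1)" "b < 2 ^ (n - 1)"
  shows "\<exists>k>0. gyro_pow n a k = b"
proof -
  define m :: nat where "m = 2 ^ (n - 1)"
  have "a \<noteq> 0" "coprime a m"
    using assms(1) by (auto simp: m_def odd_pos)
  then obtain x y where xy: "a * x = m * y + 1"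
    using bezout_nat[of a m] by auto
  \<comment> \<open>the summand m only makes k positive; it does not change k * a mod m\<close>
  define k where "k = x * b + m"
  have "k * a = b * (a * x) + m * a"
    by (simp add: k_def algebra_simps)
  also have "\<dots> = b + m * (b * y + a)"
    unfolding xy by (simp add: algebra_simps)
  finally have "k * a mod m = b"
    using assms(3) by (simp add: m_def)
  moreover have "k > 0"
    by (simp add: k_def m_def)
  ultimately show ?thesis
    using gyro_pow_P[OF assms(2), of k] by (auto simp: m_def)
qed

lemma power_graph_simps:
  "pverts (power_graph n) = {0..<2 ^ n}"
  "(u, v) \<in> parcs (power_graph n) \<longleftrightarrow> u < 2 ^ n \<and> v < 2 ^ n \<and> u \<noteq> v \<and>
     (\<exists>k>0. gyro_pow n u k = v \<or> gyro_pow n v k = u)"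
  by (auto simp: power_graph_def gyro_carrier_def)

lemma pair_fin_digraph_power_graph: "pair_fin_digraph (power_graph n)"
proof
  show "finite (parcs (power_graph n))"
    by (rule finite_subset[of _ "{0..<2 ^ n} \<times> {0..<2 ^ n}"]) (auto simp: power_graph_simps)
qed (auto simp: power_graph_simps)

lemma power_graph_arc_P:
  assumes "u < 2 ^ (n - 1)" "v < 2 ^ (n - 1)" "u \<noteq> v" "u = 0 \<or> odd u"
  shows "(u, v) \<in> parcs (power_graph n)"
proof -
  have "(2::nat) ^ (n - 1) \<le> 2 ^ n"
    by (simp add: power_increasing)
  then have "u < 2 ^ n" "v < 2 ^ n"
    using assms(1,2) by linarith+
  moreover have "\<exists>k>0. gyro_pow n u k = v \<or> gyro_pow n v k = u"
    using assms(4)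
  proof
    assume "u = 0"
    moreover have "gyro_pow n v (2 ^ (n - 1)) = 0"
      using gyro_pow_P[OF assms(2)] by simp
    ultimately show ?thesis
      by (intro exI[of _ "2 ^ (n - 1)"]) simp
  next
    assume "odd u"
    then show ?thesis
      using gyro_pow_odd_reaches_P[OF _ assms(1,2)] by blast
  qed
  ultimately show ?thesis
    using assms(3) by (simp add: power_graph_simps)
qed

lemma power_graph_arc_into_H:
  assumes "(u, v) \<in> parcs (power_graph n)" "2 ^ (n - 1) \<le> v"
  shows "u = 0"
proof -
  obtain k where "k > 0" and k: "gyro_pow n u k = v \<or> gyro_pow n v k = u"
    and "u < 2 ^ n" "v < 2 ^ n" "u \<noteq> v"
    using assms(1) by (auto simp: power_graph_simps)
  have v_pow: "gyro_pow n v k = (if even k then 0 else v)"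
    using assms(2) \<open>v < 2 ^ n\<close> by (rule gyro_pow_H)
  show ?thesis
  proof (cases "u < 2 ^ (n - 1)")
    case True
    then have "gyro_pow n u k < 2 ^ (n - 1)"
      using gyro_pow_P[OF True] by simp
    then have "gyro_pow n u k \<noteq> v"
      using assms(2) by linarith
    then show ?thesis
      using k v_pow \<open>u \<noteq> v\<close> by (auto split: if_splits)
  next
    case False
    then have "gyro_pow n u k = (if even k then 0 else u)"
      using gyro_pow_H \<open>u < 2 ^ n\<close> by simp
    then show ?thesis
      using k v_pow \<open>u \<noteq> v\<close> assms(2) False by (auto split: if_splits)
  qed
qed

lemma verts3_power_graph: "verts3 (power_graph n) \<subseteq> {0..<2 ^ (n - 1)}"
proof
  fix v
  assume v: "v \<in> verts3 (power_graph n)"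
  show "v \<in> {0..<2 ^ (n - 1)}"
  proof (rule ccontr)
    assume "v \<notin> {0..<2 ^ (n - 1)}"
    then have "in_arcs (power_graph n) v \<subseteq> {(0, v)}"
      by (auto simp: in_arcs_def dest: power_graph_arc_into_H)
    then have "in_degree (power_graph n) v \<le> card {(0::nat, v)}"
      unfolding in_degree_def by (rule card_mono[rotated]) simp
    then show False
      using v by (simp add: verts3_def)
  qed
qed

lemma kuratowski_planar_power_graph_3: "kuratowski_planar (with_proj (power_graph 3))"
proof -
  have "card (verts3 (power_graph 3)) \<le> card {0..<4::nat}"
    using verts3_power_graph[of 3] by (intro card_mono) auto
  then have "card (verts3 (power_graph 3)) < 5"
    by simp
  then show ?thesis
    by (rule kuratowski_planar_if_card_verts3_less_5[OF pair_fin_digraph_power_graph])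
qed

lemma not_kuratowski_planar_power_graph:
  assumes "4 \<le> n"
  shows "\<not> kuratowski_planar (with_proj (power_graph n))"
proof -
  interpret pair_fin_digraph "power_graph n"
    by (rule pair_fin_digraph_power_graph)
  let ?V = "{0, 1, 3, 5, 7} :: nat set"
  have "3 \<le> n - 1"
    using assms by simp
  then have "(2::nat) ^ 3 \<le> 2 ^ (n - 1)"
    by (rule power_increasing) simp
  then have V: "u < 2 ^ (n - 1)" "u = 0 \<or> odd u" if "u \<in> ?V" for u
    using that by auto
  have "(2::nat) ^ (n - 1) \<le> 2 ^ n"
    by (simp add: power_increasing)
  then have "u < 2 ^ n" if "u \<in> ?V" for u
    using V(1)[OF that] by (rule order.strict_trans2[rotated])
  then have "?V \<subseteq> pverts (power_graph n)"
    by (auto simp: power_graph_simps)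
  moreover have "card ?V = 5"
    by simp
  moreover have "(u, v) \<in> parcs (power_graph n)" if "u \<in> ?V" "v \<in> ?V" "u \<noteq> v" for u v
    using V(1)[OF that(1)] V(1)[OF that(2)] that(3) V(2)[OF that(1)] by (rule power_graph_arc_P)
  ultimately show ?thesis
    by (rule not_kuratowski_planar_if_5_clique[OF pair_wf_digraph_axioms])
qed

theorem mainTheorem1:
  fixes n :: nat
  assumes "n \<ge> 3"
  shows "kuratowski_planar (with_proj (power_graph n)) \<longleftrightarrow> n = 3"
proof (cases "n = 3")
  case True
  then show ?thesis
    using kuratowski_planar_power_graph_3 by simp
next
  case False
  then show ?thesis
    using assms not_kuratowski_planar_power_graph[of n] by simp
qed

end
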